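(* Let $B,C\subset\mathbb{R}^p$ and $w:(B\cup C)\times(B\cup C)\to[0,\infty]$. Then for every positive $d\le p$ and every $s\ge d$, $$\underline{h}^w_{s,d}(B\cup C)^{-d/s}\le\underline{h}^w_{s,d}(B)^{-d/s}+\underline{h}^w_{s,d}(C)^{-d/s},$$ with the conventions $0^{-d/s}=\infty$ and $\infty^{-d/s}=0$.
   Context: For $E\subset\mathbb{R}^p$ and a weight $w$ defined on $E\times E$, an $N$-point configuration in $E$ is a multiset $\omega_N=\{x_1,\dots,x_N\}\subset E$; $P^w_s(E;\omega_N):=\inf_{y\in E}\sum_j w(y,x_j)|y-x_j|^{-s}$, $\mathcal{P}^w_s(E;N):=\sup_{\omega_N\subset E}P^w_s(E;\omega_N)$, $\tau_{s,d}(N)=N^{s/d}$ for $s>d$ and $\tau_{d,d}(N)=N\log N$, and $\underline{h}^w_{s,d}(E):=\liminf_{N\to\infty}\mathcal{P}^w_s(E;N)/\tau_{s,d}(N)$ (with $w$ restricted to $E\times E$). *)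

theory Defs
  imports "HOL-Analysis.Analysis"
begin

definition riesz_ker :: "real \<Rightarrow> 'a::euclidean_space \<Rightarrow> 'a \<Rightarrow> ennreal" where
  "riesz_ker s y x = (if y = x then \<infinity> else ennreal (dist y x powr (- s)))"

definition point_polarization ::
  "('a::euclidean_space \<Rightarrow> 'a \<Rightarrow> ennreal) \<Rightarrow> real \<Rightarrow> 'a set \<Rightarrow> 'a multiset \<Rightarrow> ennreal" where
  "point_polarization w s E \<omega> = (INF y\<in>E. \<Sum>\<^sub># (image_mset (\<lambda>x. w y x * riesz_ker s y x) \<omega>))"

definition configs :: "'a set \<Rightarrow> nat \<Rightarrow> 'a multiset set" where
  "configs E N = {\<omega>. size \<omega> = N \<and> set_mset \<omega> \<subseteq> E}"

definition max_polarization ::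
  "('a::euclidean_space \<Rightarrow> 'a \<Rightarrow> ennreal) \<Rightarrow> real \<Rightarrow> 'a set \<Rightarrow> nat \<Rightarrow> ennreal" where
  "max_polarization w s E N = (SUP \<omega>\<in>configs E N. point_polarization w s E \<omega>)"

definition tau :: "real \<Rightarrow> real \<Rightarrow> nat \<Rightarrow> real" where
  "tau s d N = (if s > d then real N powr (s / d) else real N * ln (real N))"

definition lower_h ::
  "('a::euclidean_space \<Rightarrow> 'a \<Rightarrow> ennreal) \<Rightarrow> real \<Rightarrow> real \<Rightarrow> 'a set \<Rightarrow> ennreal" where
  "lower_h w s d E = liminf (\<lambda>N. max_polarization w s E N / ennreal (tau s d N))"

definition neg_pow :: "real \<Rightarrow> ennreal \<Rightarrow> ennreal" where
  "neg_pow a h = (if h = 0 then \<infinity> else if h = \<infinity> then 0 else ennreal (enn2real h powr (- a)))"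

end

theory Submission
  imports Defs "HOL-Real_Asymp.Real_Asymp"
begin

text \<open>Put \<open>\<lfloor>a N\<rfloor>\<close> points on \<open>B\<close> and the remaining ones on \<open>C\<close>. Every point of
  \<open>B \<union> C\<close> lies in \<open>B\<close> or in \<open>C\<close> and the kernel is nonnegative, so the polarization of the
  joint configuration is at least the smaller of the two polarizations. As
  \<open>\<tau>(a N) \<sim> a^(s/d) \<tau>(N)\<close>, this gives \<open>h(B \<union> C) \<ge> min (a^(s/d) h(B)) ((1 - a)^(s/d) h(C))\<close>
  for every \<open>0 < a < 1\<close>, and the choice \<open>a = h(B)^(-d/s) / (h(B)^(-d/s) + h(C)^(-d/s))\<close>,
  which makes both terms equal, yields the inequality.\<close>

lemma point_polarization_union:
  "min (point_polarization w s B \<omega>B) (point_polarization w s C \<omega>C)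
     \<le> point_polarization w s (B \<union> C) (\<omega>B + \<omega>C)"
proof -
  define S where "S y \<omega> = \<Sum>\<^sub># (image_mset (\<lambda>x. w y x * riesz_ker s y x) \<omega>)" for y \<omega>
  have pol: "point_polarization w s E \<omega> = (INF y\<in>E. S y \<omega>)" for E \<omega>
    unfolding point_polarization_def S_def ..
  have "S y \<omega>B \<le> S y (\<omega>B + \<omega>C)" "S y \<omega>C \<le> S y (\<omega>B + \<omega>C)" for y
    unfolding S_def by simp_all
  then have "min (INF y\<in>B. S y \<omega>B) (INF y\<in>C. S y \<omega>C) \<le> S y (\<omega>B + \<omega>C)" if "y \<in> B \<union> C" for y
    using that by (metis UnE INF_lower min.coboundedI1 min.coboundedI2 order.trans)
  then show ?thesis
    unfolding pol by (rule INF_greatest)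
qed

lemma max_polarization_union:
  "min (max_polarization w s B n) (max_polarization w s C m) \<le> max_polarization w s (B \<union> C) (n + m)"
proof (rule ccontr)
  let ?P = "max_polarization w s (B \<union> C) (n + m)"
  assume "\<not> ?thesis"
  then have "?P < max_polarization w s B n" "?P < max_polarization w s C m"
    by (auto simp: not_le)
  then obtain \<omega>B \<omega>C where B: "\<omega>B \<in> configs B n" "?P < point_polarization w s B \<omega>B"
    and C: "\<omega>C \<in> configs C m" "?P < point_polarization w s C \<omega>C"
    unfolding max_polarization_def less_SUP_iff by blast
  have "\<omega>B + \<omega>C \<in> configs (B \<union> C) (n + m)"
    using B(1) C(1) unfolding configs_def by auto
  then have "point_polarization w s (B \<union> C) (\<omega>B + \<omega>C) \<le> ?P"
    unfolding max_polarization_def by (rule SUP_upper)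
  with point_polarization_union[of w s B \<omega>B C \<omega>C] B(2) C(2) show False
    by (meson min_less_iff_conj not_le order.trans)
qed

lemma eventually_scaled_ge:
  fixes \<phi> :: "real \<Rightarrow> real"
  assumes mono: "\<And>x y. 1 \<le> x \<Longrightarrow> x \<le> y \<Longrightarrow> \<phi> x \<le> \<phi> y"
    and pos: "eventually (\<lambda>N::nat. 0 < \<phi> (real N)) sequentially"
    and lim: "((\<lambda>N::nat. \<phi> (g * real N - 1) / \<phi> (real N)) \<longlongrightarrow> L) sequentially"
    and "c < L" "0 < g"
  shows "eventually (\<lambda>N::nat. \<forall>k::nat. g * real N - 1 \<le> real k \<longrightarrow> c * \<phi> (real N) \<le> \<phi> (real k))
           sequentially"
proof -
  have "eventually (\<lambda>N::nat. 1 \<le> g * real N - 1) sequentially"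
    using \<open>0 < g\<close> by real_asymp
  moreover have "eventually (\<lambda>N. c < \<phi> (g * real N - 1) / \<phi> (real N)) sequentially"
    using order_tendstoD(1)[OF lim \<open>c < L\<close>] .
  ultimately show ?thesis using pos
  proof eventually_elim
    case (elim N)
    then have "c * \<phi> (real N) < \<phi> (g * real N - 1)"
      by (simp add: field_simps)
    with elim(1) show ?case
      by (auto intro: order.trans[OF less_imp_le mono])
  qed
qed

lemma tau_pos: "1 < N \<Longrightarrow> 0 < tau s d N"
  unfolding tau_def by auto

lemma tau_eventually_ge_scaled:
  assumes "0 < d" "d \<le> s" "0 < g" "c < g powr (s / d)"
  shows "eventually (\<lambda>N. \<forall>k. g * real N - 1 \<le> real k \<longrightarrow> c * tau s d N \<le> tau s d k) sequentially"
proof (cases "d < s")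
  case True
  have "((\<lambda>N::nat. (g * real N - 1) powr (s / d) / real N powr (s / d)) \<longlongrightarrow> g powr (s / d)) sequentially"
    using assms True by real_asymp
  moreover have "eventually (\<lambda>N::nat. 0 < real N powr (s / d)) sequentially"
    by real_asymp
  ultimately show ?thesis
    using eventually_scaled_ge[of "\<lambda>x. x powr (s / d)"] assms True
    by (simp add: tau_def powr_mono2)
next
  case False
  with assms have "s = d" by simp
  have "((\<lambda>N::nat. (g * real N - 1) * ln (g * real N - 1) / (real N * ln (real N))) \<longlongrightarrow> g) sequentially"
    using assms by real_asymp
  moreover have "eventually (\<lambda>N::nat. 0 < real N * ln (real N)) sequentially"
    by real_asymp
  ultimately show ?thesis
    using eventually_scaled_ge[of "\<lambda>x. x * ln x"] assms \<open>s = d\<close>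
    by (simp add: tau_def mult_mono)
qed

lemma ennreal_less_divide_iff:
  assumes "0 < t" "0 \<le> c"
  shows "ennreal c < X / ennreal t \<longleftrightarrow> ennreal (c * t) < X"
  using assms by (cases X) (auto simp: divide_ennreal ennreal_top_divide ennreal_less_iff field_simps)

lemma max_polarization_eventually_gt:
  assumes "0 < d" "d \<le> s" "0 < g" "0 \<le> q"
    and less: "ennreal q < lower_h w s d E * ennreal (g powr (s / d))"
  shows "eventually (\<lambda>N. \<forall>k. g * real N - 1 \<le> real k \<longrightarrow>
           ennreal (q * tau s d N) < max_polarization w s E k) sequentially"
proof -
  define x where "x = g powr (s / d)"
  have "x > 0" using \<open>0 < g\<close> unfolding x_def by simp
  with less \<open>0 \<le> q\<close> have "ennreal (q / x) < lower_h w s d E"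
    unfolding x_def by (simp add: divide_less_ennreal flip: divide_ennreal)
  then obtain z where z: "ennreal (q / x) < z" "z < lower_h w s d E"
    using dense by blast
  then have "z < top" using top.not_eq_extremum by fastforce
  then obtain q1 where q1: "z = ennreal q1" "0 \<le> q1" by (cases z) auto
  with z \<open>0 \<le> q\<close> \<open>x > 0\<close> have "q / x < q1"
    by (simp add: ennreal_less_iff)
  moreover have "0 \<le> q / x"
    using \<open>x > 0\<close> \<open>0 \<le> q\<close> by simp
  ultimately have "0 < q1"
    by linarith
  with \<open>q / x < q1\<close> \<open>x > 0\<close> have "q / q1 < x"
    by (simp add: field_simps)
  have "eventually (\<lambda>k. ennreal q1 < max_polarization w s E k / ennreal (tau s d k)) sequentially"
    using z(2) unfolding q1 lower_h_def by (rule less_LiminfD)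
  moreover have "eventually (\<lambda>k::nat. 1 < k) sequentially"
    by (rule eventually_gt_at_top)
  ultimately have "eventually (\<lambda>k. ennreal (q1 * tau s d k) < max_polarization w s E k) sequentially"
    by eventually_elim (use tau_pos \<open>0 \<le> q1\<close> ennreal_less_divide_iff in blast)
  then obtain K where K: "\<And>k. K \<le> k \<Longrightarrow> ennreal (q1 * tau s d k) < max_polarization w s E k"
    unfolding eventually_sequentially by blast
  have "eventually (\<lambda>N::nat. real K \<le> g * real N - 1) sequentially"
    using \<open>0 < g\<close> by real_asymp
  with tau_eventually_ge_scaled[OF \<open>0 < d\<close> \<open>d \<le> s\<close> \<open>0 < g\<close> \<open>q / q1 < x\<close>[unfolded x_def]]
  show ?thesis
  proof eventually_elim
    case (elim N)
    show ?case
    proof (intro allI impI)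
      fix k assume k: "g * real N - 1 \<le> real k"
      with elim have "q / q1 * tau s d N \<le> tau s d k" by blast
      with \<open>0 < q1\<close> have "q * tau s d N \<le> q1 * tau s d k"
        by (simp add: field_simps)
      then have "ennreal (q * tau s d N) \<le> ennreal (q1 * tau s d k)"
        by (rule ennreal_leI)
      also have "\<dots> < max_polarization w s E k"
        using k elim(2) by (intro K) linarith
      finally show "ennreal (q * tau s d N) < max_polarization w s E k" .
    qed
  qed
qed

lemma lower_h_union_ge_split:
  assumes "0 < d" "d \<le> s" "0 < a" "a < 1"
  shows "min (lower_h w s d B * ennreal (a powr (s / d))) (lower_h w s d C * ennreal ((1 - a) powr (s / d)))
           \<le> lower_h w s d (B \<union> C)"
  unfolding lower_h_def[of w s d "B \<union> C"]
proof (rule le_Liminf_iff[THEN iffD2], intro allI impI)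
  fix z assume z: "z < min (lower_h w s d B * ennreal (a powr (s / d)))
                           (lower_h w s d C * ennreal ((1 - a) powr (s / d)))"
  then have "z < top" using top.not_eq_extremum by fastforce
  then obtain q where q: "z = ennreal q" "0 \<le> q" by (cases z) auto
  have "eventually (\<lambda>N. \<forall>k. a * real N - 1 \<le> real k \<longrightarrow>
          ennreal (q * tau s d N) < max_polarization w s B k) sequentially"
    using z q assms by (intro max_polarization_eventually_gt) auto
  moreover have "eventually (\<lambda>N. \<forall>k. (1 - a) * real N - 1 \<le> real k \<longrightarrow>
          ennreal (q * tau s d N) < max_polarization w s C k) sequentially"
    using z q assms by (intro max_polarization_eventually_gt) auto
  moreover have "eventually (\<lambda>N::nat. 1 < N) sequentially"
    by (rule eventually_gt_at_top)
  ultimately show "eventually (\<lambda>N. z < max_polarization w s (B \<union> C) N / ennreal (tau s d N)) sequentially"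
  proof eventually_elim
    case (elim N)
    define n where "n = nat \<lfloor>a * real N\<rfloor>"
    have n_lower: "a * real N - 1 \<le> real n"
      unfolding n_def by linarith
    have n_upper: "real n \<le> a * real N"
      unfolding n_def using \<open>0 < a\<close> by (simp add: of_nat_nat)
    have "a * real N \<le> real N"
      using assms by (intro mult_left_le_one_le) auto
    with n_upper have "n \<le> N"
      by (simp flip: of_nat_le_iff)
    with n_upper have "(1 - a) * real N - 1 \<le> real (N - n)"
      by (simp add: of_nat_diff algebra_simps)
    with elim(1,2) n_lower have "ennreal (q * tau s d N) < max_polarization w s B n"
      "ennreal (q * tau s d N) < max_polarization w s C (N - n)"
      by blast+
    then have "ennreal (q * tau s d N) < min (max_polarization w s B n) (max_polarization w s C (N - n))"
      by simp
    also have "\<dots> \<le> max_polarization w s (B \<union> C) (n + (N - n))"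
      by (rule max_polarization_union)
    also have "n + (N - n) = N"
      using \<open>n \<le> N\<close> by simp
    finally show ?case
      unfolding q(1) ennreal_less_divide_iff[OF tau_pos[OF elim(3)] q(2)] .
  qed
qed

lemma powr_balanced_split:
  fixes b c e r :: real
  assumes "0 < b" "0 < c" "e * r = 1"
  defines "S \<equiv> b powr (- e) + c powr (- e)"
  defines "\<alpha> \<equiv> b powr (- e) / S"
  shows "0 < \<alpha>" "\<alpha> < 1" "b * \<alpha> powr r = S powr (- r)" "c * (1 - \<alpha>) powr r = S powr (- r)"
proof -
  have pos: "0 < b powr (- e)" "0 < c powr (- e)"
    using assms by simp_all
  then have "0 < S"
    unfolding S_def by (rule add_pos_pos)
  with pos show "0 < \<alpha>" "\<alpha> < 1"
    unfolding \<alpha>_def S_def by simp_all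
  have scale: "x * (x powr (- e) / S) powr r = S powr (- r)" if "0 < x" for x
  proof -
    have "(x powr (- e) / S) powr r = x powr (- (e * r)) / S powr r"
      using that \<open>0 < S\<close> by (simp add: powr_divide powr_powr)
    also have "\<dots> = 1 / (x * S powr r)"
      using that \<open>e * r = 1\<close> by (simp add: powr_minus_divide)
    finally show ?thesis
      using that by (simp add: powr_minus_divide)
  qed
  show "b * \<alpha> powr r = S powr (- r)"
    unfolding \<alpha>_def using scale \<open>0 < b\<close> .
  have "1 - \<alpha> = c powr (- e) / S"
    unfolding \<alpha>_def using \<open>0 < S\<close> by (simp add: field_simps S_def)
  then show "c * (1 - \<alpha>) powr r = S powr (- r)"
    using scale \<open>0 < c\<close> by simp
qed

lemma neg_pow_le_of_ennreal_le:
  assumes "0 < x" "0 < a" "ennreal x \<le> h"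
  shows "neg_pow a h \<le> ennreal (x powr (- a))"
proof (cases h)
  case (real y)
  with assms have "x \<le> y" "0 < y"
    by (auto simp: ennreal_le_iff2)
  with assms real show ?thesis
    by (auto simp: neg_pow_def intro!: ennreal_leI powr_mono2')
qed (simp add: neg_pow_def)

lemma neg_pow_approx_below:
  assumes "0 < a" "h \<noteq> 0" "0 < \<epsilon>"
  obtains x where "0 < x" "ennreal x \<le> h" "ennreal (x powr (- a)) \<le> neg_pow a h + ennreal \<epsilon>"
proof (cases h)
  case (real y)
  with assms have "0 < y"
    by (auto simp: ennreal_eq_0_iff)
  with real that show ?thesis
    by (simp add: neg_pow_def)
next
  case top
  have "(\<epsilon> powr (- 1 / a)) powr (- a) = \<epsilon>"
    using assms by (simp add: powr_powr)
  with top assms that[of "\<epsilon> powr (- 1 / a)"] show ?thesis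
    by (simp add: neg_pow_def)
qed

lemma neg_pow_le_add_of_split:
  fixes hB hC h :: ennreal
  assumes "0 < e" "e * r = 1"
    and split: "\<And>a. 0 < a \<Longrightarrow> a < 1 \<Longrightarrow>
                  min (hB * ennreal (a powr r)) (hC * ennreal ((1 - a) powr r)) \<le> h"
  shows "neg_pow e h \<le> neg_pow e hB + neg_pow e hC"
proof (cases "hB = 0 \<or> hC = 0")
  case True
  then show ?thesis by (auto simp: neg_pow_def)
next
  case False
  \<comment> \<open>Approximating \<open>hB\<close> and \<open>hC\<close> from below by positive reals also covers infinite values.\<close>
  show ?thesis
  proof (rule ennreal_le_epsilon)
    fix \<epsilon> :: real assume "0 < \<epsilon>"
    obtain b where b: "0 < b" "ennreal b \<le> hB" "ennreal (b powr (- e)) \<le> neg_pow e hB + ennreal (\<epsilon> / 2)"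
      using neg_pow_approx_below[of e hB "\<epsilon> / 2"] False \<open>0 < e\<close> \<open>0 < \<epsilon>\<close> by auto
    obtain c where c: "0 < c" "ennreal c \<le> hC" "ennreal (c powr (- e)) \<le> neg_pow e hC + ennreal (\<epsilon> / 2)"
      using neg_pow_approx_below[of e hC "\<epsilon> / 2"] False \<open>0 < e\<close> \<open>0 < \<epsilon>\<close> by auto
    define S where "S = b powr (- e) + c powr (- e)"
    define \<alpha> where "\<alpha> = b powr (- e) / S"
    have "0 < S"
      unfolding S_def using b c by (intro add_pos_pos) simp_all
    note balanced = powr_balanced_split[OF \<open>0 < b\<close> \<open>0 < c\<close> \<open>e * r = 1\<close>, folded S_def, folded \<alpha>_def]
    have "ennreal b * ennreal (\<alpha> powr r) \<le> hB * ennreal (\<alpha> powr r)"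
      "ennreal c * ennreal ((1 - \<alpha>) powr r) \<le> hC * ennreal ((1 - \<alpha>) powr r)"
      using b c by (simp_all add: mult_right_mono)
    then have "ennreal (S powr (- r)) \<le> min (hB * ennreal (\<alpha> powr r)) (hC * ennreal ((1 - \<alpha>) powr r))"
      using balanced b c by (simp add: ennreal_mult[symmetric])
    also have "\<dots> \<le> h"
      using split balanced(1,2) .
    finally have "neg_pow e h \<le> ennreal ((S powr (- r)) powr (- e))"
      using \<open>0 < e\<close> \<open>0 < S\<close> by (intro neg_pow_le_of_ennreal_le) auto
    also have "\<dots> = ennreal (b powr (- e)) + ennreal (c powr (- e))"
      using \<open>e * r = 1\<close> b c by (simp add: powr_powr mult.commute S_def ennreal_plus)
    also have "\<dots> \<le> neg_pow e hB + neg_pow e hC + ennreal \<epsilon>"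
    proof -
      have "ennreal (\<epsilon> / 2) + ennreal (\<epsilon> / 2) = ennreal \<epsilon>"
        using \<open>0 < \<epsilon>\<close> by (simp flip: ennreal_plus)
      with add_mono[OF b(3) c(3)] show ?thesis
        by (simp add: ac_simps)
    qed
    finally show "neg_pow e h \<le> neg_pow e hB + neg_pow e hC + ennreal \<epsilon>" .
  qed
qed

theorem lemma3:
  fixes B C :: "'a::euclidean_space set"
    and w :: "'a \<Rightarrow> 'a \<Rightarrow> ennreal"
    and d s :: real
  assumes "0 < d" and "d \<le> real DIM('a)" and "d \<le> s"
  shows "neg_pow (d / s) (lower_h w s d (B \<union> C))
           \<le> neg_pow (d / s) (lower_h w s d B) + neg_pow (d / s) (lower_h w s d C)"
proof (rule neg_pow_le_add_of_split)
  show "0 < d / s" "d / s * (s / d) = 1"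
    using assms by auto
  show "min (lower_h w s d B * ennreal (a powr (s / d))) (lower_h w s d C * ennreal ((1 - a) powr (s / d)))
          \<le> lower_h w s d (B \<union> C)" if "0 < a" "a < 1" for a
    using assms that by (intro lower_h_union_ge_split)
qed

end
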